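(* For arbitrarily large integers $n$ there exist (families of) feasible $n$-node graphs with election index $1$ such that leader election in time $1$ in these graphs requires advice of size $\Omega(n\log\log n)$. Precisely: there is a constant $c>0$ such that for infinitely many integers $n$ there is a finite family $\mathcal{F}_n$ of feasible $n$-node graphs, each with election index $1$, such that for every deterministic leader election algorithm with advice that performs leader election in time $1$ in every graph of $\mathcal{F}_n$, some graph of $\mathcal{F}_n$ receives advice of length at least $c\, n\log\log n$.
   Context: A graph is a simple undirected connected finite graph whose nodes have no identifiers; at each node $v$ of degree $d$ the incident edges carry distinct port numbers $0,\dots,d-1$ (local to each node). The truncated view $\mathcal{V}^0(v)$ is a single node; $\mathcal{V}^{l+1}(v)$ is the port-labelled rooted tree whose root has, for every neighbour $v_i$ of $v$, a child $x_i$ joined by an edge carrying the same two port numbers as $\{v,v_i\}$ (the one at $v$ at the root side), and $x_i$ is the root of a copy of $\mathcal{V}^l(v_i)$. The augmented truncated view $\mathcal{B}^l(v)$ is $\mathcal{V}^l(v)$ with each leaf labelled by the degree in $G$ of the node it represents. A graph is feasible if for some $l$ the views $\mathcal{B}^l(v)$ of all nodes are pairwise distinct; its election index is the smallest such $l$. Model (LOCAL): synchronous rounds, all nodes start simultaneously, in each round every node exchanges arbitrary messages with all neighbours and computes arbitrarily. Leader election: every node $v$ outputs a sequence $(p_1,q_1,\dots,p_k,q_k)$ of nonnegative integers describing a simple path starting at $v$ whose $i$-th edge has port $p_i$ at its endpoint closer to $v$ and $q_i$ at the other endpoint; all these paths must end at a common node. Time is the number of rounds until all nodes output. Advice: an oracle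 knowing the entire port-labelled graph gives the same binary string to all nodes before the start; its length is the size of advice. In a deterministic algorithm with advice, the actions/output of node $v$ in round $r$ are a function of the advice and of $\mathcal{B}^r(v)$. Logarithms are base 2. *)

theory Defs
  imports Complex_Main
begin

text \<open>At node v the incident
edges carry the ports 0..<deg G v, and nbr G v p is the neighbour reached
through port p at v. Nodes have no identifiers: node numbers are only used
for the representation; the algorithm only sees views.\<close>

record pgraph =
  nv  :: nat
  deg :: "nat \<Rightarrow> nat"
  nbr :: "nat \<Rightarrow> nat \<Rightarrow> nat"

definition verts :: "pgraph \<Rightarrow> nat set" where
  "verts G = {..<nv G}"

definition edge_rel :: "pgraph \<Rightarrow> (nat \<times> nat) set" where
  "edge_rel G = {(u, w). u < nv G \<and> (\<exists>p < deg G u. nbr G u p = w)}"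

definition wf_pgraph :: "pgraph \<Rightarrow> bool" where
  "wf_pgraph G \<longleftrightarrow>
     nv G \<ge> 1 \<and>
     (\<forall>v < nv G. \<forall>p < deg G v. nbr G v p < nv G \<and> nbr G v p \<noteq> v) \<and>
     (\<forall>v < nv G. inj_on (nbr G v) {..<deg G v}) \<and>
     (\<forall>v < nv G. \<forall>p < deg G v. \<exists>q < deg G (nbr G v p). nbr G (nbr G v p) q = v) \<and>
     (\<forall>u < nv G. \<forall>v < nv G. (u, v) \<in> (edge_rel G)\<^sup>*)"

definition rport :: "pgraph \<Rightarrow> nat \<Rightarrow> nat \<Rightarrow> nat" where
  "rport G v p = (THE q. q < deg G (nbr G v p) \<and> nbr G (nbr G v p) q = v)"

text \<open>Port-labelled rooted trees; leaves carry a label (the degree).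
The children of a node are listed in the order of the port at the parent.\<close>
datatype view = Leaf nat | Node "(nat \<times> nat \<times> view) list"

fun bview :: "pgraph \<Rightarrow> nat \<Rightarrow> nat \<Rightarrow> view" where
  "bview G 0 v = Leaf (deg G v)"
| "bview G (Suc l) v =
     Node (map (\<lambda>p. (p, rport G v p, bview G l (nbr G v p))) [0..<deg G v])"

definition feasible :: "pgraph \<Rightarrow> bool" where
  "feasible G \<longleftrightarrow> (\<exists>l. inj_on (bview G l) (verts G))"

definition election_index :: "pgraph \<Rightarrow> nat" where
  "election_index G = (LEAST l. inj_on (bview G l) (verts G))"

text \<open>Following an output sequence (p1,q1,...,pk,qk) from u; returns the list
of visited nodes if the sequence describes a walk, None otherwise.\<close>
fun walk :: "pgraph \<Rightarrow> nat \<Rightarrow> nat list \<Rightarrow> nat list option" where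
  "walk G u [] = Some [u]"
| "walk G u [p] = None"
| "walk G u (p # q # rest) =
     (if p < deg G u \<and> rport G u p = q
      then map_option (Cons u) (walk G (nbr G u p) rest) else None)"

definition elects :: "pgraph \<Rightarrow> (nat \<Rightarrow> nat list) \<Rightarrow> bool" where
  "elects G out \<longleftrightarrow>
     (\<exists>l \<in> verts G. \<forall>v \<in> verts G. \<exists>vs.
        walk G v (out v) = Some vs \<and> distinct vs \<and> last vs = l)"

text \<open>A deterministic algorithm with advice working in time 1: the oracle adv
maps each graph to an advice string, and the output of node v is a function
A of the advice and of B^1(v).\<close>
definition elects_time1 :: "(pgraph \<Rightarrow> bool list) \<Rightarrow> (bool list \<Rightarrow> view \<Rightarrow> nat list) \<Rightarrow> pgraph \<Rightarrow> bool" where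
  "elects_time1 adv A G \<longleftrightarrow> elects G (\<lambda>v. A (adv G) (bview G 1 v))"

end

theory Submission
  imports Defs "HOL-Combinatorics.Permutations" "HOL-Library.Infinite_Set"
begin

text \<open>Fix m \<ge> 3 and K = m^m. The graph for a permutation \<rho> of {..<K} consists of a hub joined to
K spokes and of K blocks; block i is a clique formed by a head and m members, and the head of
block i is joined to spoke \<rho> i. The ports inside block i spell out the m base-m digits of i, so
all radius-1 views are distinct (election index 1), and these views do not depend on \<rho>. Hence,
with the same advice, a time-1 algorithm produces the same outputs in all K! graphs. But the head
of a block not containing the leader can only leave its block through its spoke and then the hub,
and the port it outputs at the hub is \<rho> i. So the advice determines \<rho>, and at least
log K! = \<Theta>(K m log m) = \<Theta>(n log log n) advice bits are needed, since n = \<Theta>(m K).\<close>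

section \<open>Counting\<close>

lemma card_bool_lists_le: "card {xs :: bool list. length xs \<le> n} < 2 ^ Suc n"
proof -
  have "card {xs :: bool list. length xs \<le> n} = (\<Sum>i\<le>n. 2 ^ i)"
    using card_lists_length_le[of "UNIV :: bool set" n] by simp
  also have "\<dots> < 2 ^ Suc n" by (induction n) auto
  finally show ?thesis .
qed

lemma exists_long_code:
  fixes code :: "'a \<Rightarrow> bool list"
  assumes "finite P" "P \<noteq> {}" "inj_on code P"
  shows "\<exists>x\<in>P. log 2 (real (card P)) < real (length (code x)) + 1"
proof -
  define n where "n = Max ((\<lambda>x. length (code x)) ` P)"
  have "n \<in> (\<lambda>x. length (code x)) ` P" unfolding n_def using assms(1,2) by (intro Max_in) auto
  then obtain x where x: "x \<in> P" "length (code x) = n" by auto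
  have "finite {xs :: bool list. length xs \<le> n}"
    using finite_lists_length_le[of "UNIV :: bool set" n] by simp
  moreover have "code ` P \<subseteq> {xs. length xs \<le> n}" unfolding n_def using assms(1) by auto
  ultimately have "card (code ` P) \<le> card {xs :: bool list. length xs \<le> n}" by (rule card_mono)
  then have "card P < (2::nat) ^ Suc n"
    unfolding card_image[OF assms(3)] using card_bool_lists_le by (rule le_less_trans)
  then have "real (card P) < 2 ^ Suc n" by (metis of_nat_less_iff of_nat_numeral of_nat_power)
  moreover have "0 < card P" using assms(1,2) by (simp add: card_gt_0_iff)
  ultimately have "log 2 (real (card P)) < log 2 (2 ^ Suc n)" by (intro log_less) auto
  then show ?thesis using x by (simp only: log_pow_cancel) (auto intro!: bexI[of _ x])
qed

lemma Suc_power_le_fact_add: "(a + 1) ^ b \<le> fact (a + b)"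
proof (induction b)
  case (Suc b)
  have "(a + 1) ^ Suc b = (a + 1) * (a + 1) ^ b" by simp
  also have "\<dots> \<le> (a + b + 1) * fact (a + b)" using Suc by (intro mult_mono) auto
  also have "\<dots> = fact (a + Suc b)" by simp
  finally show ?case .
qed simp

lemma log2_fact_ge:
  assumes "2 \<le> K"
  shows "real K / 2 * log 2 (real K / 2) \<le> log 2 (fact K)"
proof -
  define a where "a = K div 2"
  define b where "b = K - a"
  have a: "real K / 2 \<le> real (a + 1)" and b: "real K / 2 \<le> real b"
    unfolding a_def b_def by linarith+
  have "0 \<le> log 2 (real K / 2)" using assms by simp
  moreover have "log 2 (real K / 2) \<le> log 2 (real (a + 1))" using a assms by simp
  ultimately have "real K / 2 * log 2 (real K / 2) \<le> real b * log 2 (real (a + 1))"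
    using b by (intro mult_mono) auto
  also have "\<dots> = log 2 (real ((a + 1) ^ b))" by (simp add: log_nat_power)
  also have "\<dots> \<le> log 2 (fact K)"
  proof (intro log_mono)
    have "(a + 1) ^ b \<le> fact K" using Suc_power_le_fact_add[of a b] by (simp add: a_def b_def)
    then show "real ((a + 1) ^ b) \<le> fact K" by (metis of_nat_fact of_nat_le_iff)
  qed auto
  finally show ?thesis .
qed

lemma permutes_eq_if_eq_off_point:
  assumes p: "\<rho> permutes S" and p': "\<rho>' permutes S"
    and eq: "\<forall>i\<in>S. i \<noteq> i0 \<longrightarrow> \<rho> i = \<rho>' i"
  shows "\<rho> = \<rho>'"
proof
  fix x
  show "\<rho> x = \<rho>' x"
  proof (cases "x \<in> S \<and> x = i0")
    case False
    then show ?thesis using eq permutes_not_in[OF p] permutes_not_in[OF p'] by metis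
  next
    case True
    define y where "y = inv \<rho> (\<rho>' x)"
    have "\<rho>' x \<in> S" using True permutes_in_image[OF p'] by blast
    then have "y \<in> S" using permutes_in_image[OF permutes_inv[OF p]] by (simp add: y_def)
    have "\<rho> y = \<rho>' x" using permutes_inverses(1)[OF p] by (simp add: y_def)
    then have "\<rho>' y = \<rho>' x" if "y \<noteq> x" using eq True that \<open>y \<in> S\<close> by auto
    then have "y = x" using permutes_inj[OF p'] by (auto simp: inj_eq)
    then show ?thesis using \<open>\<rho> y = \<rho>' x\<close> by simp
  qed
qed

section \<open>Walks and leaders in port-labelled graphs\<close>

lemma walk_Some_hd: "walk G u s = Some vs \<Longrightarrow> vs \<noteq> [] \<and> hd vs = u"
  by (induction G u s arbitrary: vs rule: walk.induct) (auto split: if_splits)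

lemma walk_Some_ConsD:
  "walk G u (p # q # rest) = Some vs \<Longrightarrow>
     p < deg G u \<and> rport G u p = q \<and> (\<exists>vs'. walk G (nbr G u p) rest = Some vs' \<and> vs = u # vs')"
  by (auto split: if_splits)

lemma walk_Some_ConsE:
  assumes "walk G u s = Some vs" "s \<noteq> []"
  obtains p q rest where "s = p # q # rest"
  using assms by (cases s rule: remdups_adj.cases) auto

lemma walk_last_neq_start:
  assumes w: "walk G u s = Some vs" and "s \<noteq> []" and "distinct vs"
  shows "last vs \<noteq> u"
proof -
  obtain p q rest where "s = p # q # rest" using walk_Some_ConsE assms(1,2) .
  then obtain vs' where w': "walk G (nbr G u p) rest = Some vs'" "vs = u # vs'"
    using walk_Some_ConsD w by blast
  then have "last vs \<in> set vs'" using walk_Some_hd[OF w'(1)] by simp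
  then show ?thesis using \<open>distinct vs\<close> w'(2) by auto
qed

lemma walk_stays_in:
  assumes closed: "\<forall>y\<in>S. \<forall>p<deg G y. nbr G y p \<in> S \<or> nbr G y p = a"
  shows "walk G x s = Some vs \<Longrightarrow> x \<in> S \<Longrightarrow> a \<notin> set vs \<Longrightarrow> set vs \<subseteq> S"
proof (induction s arbitrary: x vs rule: length_induct)
  case (1 s)
  show ?case
  proof (cases "s = []")
    case False
    then obtain p q rest where s: "s = p # q # rest" using walk_Some_ConsE 1(2) by blast
    obtain vs' where w: "walk G (nbr G x p) rest = Some vs'" "vs = x # vs'" "p < deg G x"
      using walk_Some_ConsD 1(2) s by blast
    have "nbr G x p \<in> set vs'" using walk_Some_hd[OF w(1)] by (metis hd_in_set)
    then have "nbr G x p \<in> S" using closed 1(3,4) w(2,3) by auto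
    moreover have "length rest < length s" "a \<notin> set vs'" using s 1(4) w(2) by auto
    ultimately have "set vs' \<subseteq> S" using 1(1) w(1) by blast
    then show ?thesis using w(2) 1(3) by simp
  qed (use 1 in auto)
qed

text \<open>The leader is the only node whose output is the empty path, so an output function that is
correct on two graphs with the same nodes elects the same node in both.\<close>

lemma elects_common_leader:
  assumes "elects G out" "elects G' out" "verts G' = verts G"
  shows "\<exists>l\<in>verts G. \<forall>v\<in>verts G.
    (\<exists>vs. walk G v (out v) = Some vs \<and> distinct vs \<and> last vs = l) \<and>
    (\<exists>vs. walk G' v (out v) = Some vs \<and> distinct vs \<and> last vs = l)"
proof -
  obtain l where l: "l \<in> verts G"
    "\<forall>v\<in>verts G. \<exists>vs. walk G v (out v) = Some vs \<and> distinct vs \<and> last vs = l"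
    using assms(1) unfolding elects_def by blast
  obtain l' where l': "l' \<in> verts G"
    "\<forall>v\<in>verts G. \<exists>vs. walk G' v (out v) = Some vs \<and> distinct vs \<and> last vs = l'"
    using assms(2,3) unfolding elects_def by auto
  have "out l' = []" using l'(2) l'(1) walk_last_neq_start by metis
  moreover obtain vs where "walk G l' (out l') = Some vs" "last vs = l" using l(2) l'(1) by blast
  ultimately have "l = l'" by auto
  then show ?thesis using l l' by blast
qed

section \<open>Base-m digits and the ports inside a block\<close>

definition digit :: "nat \<Rightarrow> nat \<Rightarrow> nat \<Rightarrow> nat" where
  "digit m i t = i div m ^ t mod m"

lemma digit_lt: "0 < m \<Longrightarrow> digit m i t < m"
  by (simp add: digit_def)

lemma eq_if_digits_eq:
  "i < m ^ n \<Longrightarrow> i' < m ^ n \<Longrightarrow> (\<forall>t<n. digit m i t = digit m i' t) \<Longrightarrow> i = i'"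
proof (induction n arbitrary: i i')
  case (Suc n)
  have "i div m < m ^ n" "i' div m < m ^ n" using Suc.prems(1,2)
    by (simp_all add: less_mult_imp_div_less mult.commute)
  moreover have "digit m (i div m) t = digit m (i' div m) t" if "t < n" for t
    using Suc.prems(3)[rule_format, of "Suc t"] that by (simp add: digit_def div_mult2_eq)
  ultimately have "i div m = i' div m" using Suc.IH by blast
  moreover have "i mod m = i' mod m" using Suc.prems(3)[rule_format, of 0] by (simp add: digit_def)
  ultimately show ?case by (metis mod_div_mult_eq)
qed simp

text \<open>The m ports of the member t of a block are arranged cyclically: the head is reached through
port d, and member l through port (d + l - t) mod m.\<close>

definition clique_nbr :: "nat \<Rightarrow> nat \<Rightarrow> nat \<Rightarrow> nat \<Rightarrow> nat" where
  "clique_nbr m d t p = nat ((int p - int d + int t) mod int m)"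

definition clique_port :: "nat \<Rightarrow> nat \<Rightarrow> nat \<Rightarrow> nat \<Rightarrow> nat" where
  "clique_port m d t l = nat ((int d + int l - int t) mod int m)"

lemma clique_nbr_lt: "0 < m \<Longrightarrow> clique_nbr m d t p < m"
  unfolding clique_nbr_def by (simp add: nat_less_iff)

lemma clique_port_lt: "0 < m \<Longrightarrow> clique_port m d t l < m"
  unfolding clique_port_def by (simp add: nat_less_iff)

lemma clique_nbr_port: "l < m \<Longrightarrow> clique_nbr m d t (clique_port m d t l) = l"
proof -
  assume l: "l < m"
  have "((int d + int l - int t) mod int m - int d + int t) mod int m
        = (int d + int l - int t - int d + int t) mod int m"
    by (metis mod_add_left_eq mod_diff_left_eq)
  then show ?thesis using l unfolding clique_nbr_def clique_port_def by simp
qed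

lemma clique_port_nbr: "p < m \<Longrightarrow> clique_port m d t (clique_nbr m d t p) = p"
proof -
  assume p: "p < m"
  have "(int d + (int p - int d + int t) mod int m - int t) mod int m
        = (int d + (int p - int d + int t) - int t) mod int m"
    by (metis mod_add_right_eq mod_diff_left_eq)
  then show ?thesis using p unfolding clique_nbr_def clique_port_def by simp
qed

lemma clique_nbr_eq_self_iff:
  assumes "p < m" "d < m" "t < m"
  shows "clique_nbr m d t p = t \<longleftrightarrow> p = d"
proof
  have "clique_port m d t t = d" using assms(2) by (simp add: clique_port_def)
  then show "clique_nbr m d t p = t \<Longrightarrow> p = d" using clique_port_nbr[OF assms(1)] by metis
qed (use assms(3) in \<open>simp add: clique_nbr_def\<close>)

lemma clique_port_eq_head_iff:
  assumes "l < m" "d < m" "t < m"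
  shows "clique_port m d t l = d \<longleftrightarrow> l = t"
proof
  have "clique_nbr m d t d = t" using assms(3) by (simp add: clique_nbr_def)
  then show "clique_port m d t l = d \<Longrightarrow> l = t" using clique_nbr_port[OF assms(1)] by metis
qed (use assms(2) in \<open>simp add: clique_port_def\<close>)

lemma clique_port_inj_head:
  assumes "0 < m" "d < m" "d' < m" "clique_port m d t l = clique_port m d' t l"
  shows "d = d'"
proof -
  have "(int d + (int l - int t)) mod int m = (int d' + (int l - int t)) mod int m"
    using assms(4) unfolding clique_port_def using assms(1)
    by (subst (asm) eq_nat_nat_iff) (simp_all add: algebra_simps)
  then have "int d mod int m = int d' mod int m" by algebra
  then show ?thesis using assms(2,3) by simp
qed

section \<open>The graphs of the family\<close>

datatype node = Hub | Spoke nat | Head nat | Member nat nat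

definition num_blocks :: "nat \<Rightarrow> nat" where
  "num_blocks m = m ^ m"

definition num_nodes :: "nat \<Rightarrow> nat" where
  "num_nodes m = 1 + num_blocks m + num_blocks m * (m + 1)"

fun is_node :: "nat \<Rightarrow> node \<Rightarrow> bool" where
  "is_node m Hub = True"
| "is_node m (Spoke j) = (j < num_blocks m)"
| "is_node m (Head i) = (i < num_blocks m)"
| "is_node m (Member i t) = (i < num_blocks m \<and> t < m)"

fun node_index :: "nat \<Rightarrow> node \<Rightarrow> nat" where
  "node_index m Hub = 0"
| "node_index m (Spoke j) = Suc j"
| "node_index m (Head i) = Suc (num_blocks m + i * (m + 1))"
| "node_index m (Member i t) = Suc (num_blocks m + i * (m + 1) + Suc t)"

definition block_node :: "nat \<Rightarrow> nat \<Rightarrow> node" where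
  "block_node m u = (if u mod (m + 1) = 0 then Head (u div (m + 1))
                     else Member (u div (m + 1)) (u mod (m + 1) - 1))"

definition node_at :: "nat \<Rightarrow> nat \<Rightarrow> node" where
  "node_at m v = (if v = 0 then Hub else if v \<le> num_blocks m then Spoke (v - 1)
                  else block_node m (v - 1 - num_blocks m))"

lemma num_blocks_ge: "3 \<le> m \<Longrightarrow> m + 2 \<le> num_blocks m"
proof -
  assume m: "3 \<le> m"
  have "m + 2 \<le> m * m" using mult_le_mono1[OF m, of m] m by linarith
  also have "\<dots> = m ^ 2" by (simp add: power2_eq_square)
  also have "\<dots> \<le> m ^ m" using m by (intro power_increasing) auto
  finally show ?thesis unfolding num_blocks_def .
qed

lemma node_at_index: "is_node m x \<Longrightarrow> node_at m (node_index m x) = x"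
proof (cases x)
  case (Head i)
  have "(i * (m + 1)) mod (m + 1) = 0" by (rule mod_mult_self2_is_0)
  moreover have "(i * (m + 1)) div (m + 1) = i" by (rule nonzero_mult_div_cancel_right) simp
  ultimately show ?thesis using Head by (simp add: node_at_def block_node_def)
next
  case (Member i t)
  assume "is_node m x"
  then have "t < m" using Member by simp
  then have "(Suc t + i * (m + 1)) mod (m + 1) = Suc t" "(Suc t + i * (m + 1)) div (m + 1) = i"
    by (simp only: mod_mult_self1 div_mult_self1[of "m + 1"]; simp)+
  then show ?thesis using Member by (simp add: node_at_def block_node_def add.commute)
qed (auto simp: node_at_def)

lemma node_index_lt: "is_node m x \<Longrightarrow> node_index m x < num_nodes m"
proof (cases x)
  case (Head i)
  assume "is_node m x"
  then have "Suc i * (m + 1) \<le> num_blocks m * (m + 1)" using Head by (intro mult_right_mono) auto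
  then show ?thesis using Head by (simp add: num_nodes_def)
next
  case (Member i t)
  assume "is_node m x"
  then have i: "Suc i \<le> num_blocks m" and t: "t < m" using Member by auto
  have "Suc i * (m + 1) \<le> num_blocks m * (m + 1)" using i by (rule mult_right_mono) simp
  then show ?thesis using Member t by (simp add: num_nodes_def)
qed (auto simp: num_nodes_def)

lemma node_index_inj: "is_node m x \<Longrightarrow> is_node m y \<Longrightarrow> node_index m x = node_index m y \<Longrightarrow> x = y"
  by (metis node_at_index)

lemma node_at_lt:
  assumes "v < num_nodes m"
  shows is_node_node_at: "is_node m (node_at m v)"
    and node_index_node_at: "node_index m (node_at m v) = v"
proof -
  have "is_node m (node_at m v) \<and> node_index m (node_at m v) = v"
  proof (cases "v \<le> num_blocks m")
    case False
    define u where "u = v - 1 - num_blocks m"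
    have u: "u div (m + 1) < num_blocks m"
      using assms False by (simp add: num_nodes_def u_def less_mult_imp_div_less)
    have v: "v = Suc (num_blocks m + u mod (m + 1) + u div (m + 1) * (m + 1))"
      using False mod_div_mult_eq[of u "m + 1"] by (simp add: u_def)
    have "u mod (m + 1) \<noteq> 0 \<Longrightarrow> u mod (m + 1) - 1 < m"
      using mod_less_divisor[of "m + 1" u] by linarith
    then show ?thesis
      using False u v by (auto simp: node_at_def block_node_def u_def[symmetric] simp del: mult_Suc_right)
  qed (auto simp: node_at_def)
  then show "is_node m (node_at m v)" "node_index m (node_at m v) = v" by simp_all
qed

fun node_deg :: "nat \<Rightarrow> node \<Rightarrow> nat" where
  "node_deg m Hub = num_blocks m"
| "node_deg m (Spoke j) = 2"
| "node_deg m (Head i) = m + 1"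
| "node_deg m (Member i t) = m"

fun node_nbr :: "nat \<Rightarrow> (nat \<Rightarrow> nat) \<Rightarrow> node \<Rightarrow> nat \<Rightarrow> node" where
  "node_nbr m \<rho> Hub p = Spoke p"
| "node_nbr m \<rho> (Spoke j) p = (if p = 0 then Hub else Head (inv \<rho> j))"
| "node_nbr m \<rho> (Head i) p = (if p = 0 then Spoke (\<rho> i) else Member i (p - 1))"
| "node_nbr m \<rho> (Member i t) p =
     (if p = digit m i t then Head i else Member i (clique_nbr m (digit m i t) t p))"

text \<open>The port at the far end of an edge, and the degree of the far endpoint: neither
depends on \<rho>.\<close>

fun node_rport :: "nat \<Rightarrow> node \<Rightarrow> nat \<Rightarrow> nat" where
  "node_rport m Hub p = 0"
| "node_rport m (Spoke j) p = (if p = 0 then j else 0)"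
| "node_rport m (Head i) p = (if p = 0 then 1 else digit m i (p - 1))"
| "node_rport m (Member i t) p = (if p = digit m i t then Suc t
     else clique_port m (digit m i (clique_nbr m (digit m i t) t p)) (clique_nbr m (digit m i t) t p) t)"

fun nbr_deg :: "nat \<Rightarrow> node \<Rightarrow> nat \<Rightarrow> nat" where
  "nbr_deg m Hub p = 2"
| "nbr_deg m (Spoke j) p = (if p = 0 then num_blocks m else m + 1)"
| "nbr_deg m (Head i) p = (if p = 0 then 2 else m)"
| "nbr_deg m (Member i t) p = (if p = digit m i t then m + 1 else m)"

definition perm_graph :: "nat \<Rightarrow> (nat \<Rightarrow> nat) \<Rightarrow> pgraph" where
  "perm_graph m \<rho> = \<lparr>nv = num_nodes m, deg = (\<lambda>v. node_deg m (node_at m v)),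
                      nbr = (\<lambda>v p. node_index m (node_nbr m \<rho> (node_at m v) p))\<rparr>"

lemma perm_graph_simps [simp]:
  "nv (perm_graph m \<rho>) = num_nodes m"
  "deg (perm_graph m \<rho>) v = node_deg m (node_at m v)"
  "nbr (perm_graph m \<rho>) v p = node_index m (node_nbr m \<rho> (node_at m v) p)"
  by (simp_all add: perm_graph_def)

lemma verts_perm_graph: "verts (perm_graph m \<rho>) = {..<num_nodes m}"
  by (simp add: verts_def)

definition local_view :: "nat \<Rightarrow> node \<Rightarrow> view" where
  "local_view m x = Node (map (\<lambda>p. (p, node_rport m x p, Leaf (nbr_deg m x p))) [0..<node_deg m x])"

lemma rport_eqI:
  assumes "q < deg G (nbr G v p)" "nbr G (nbr G v p) q = v"
    "inj_on (nbr G (nbr G v p)) {..<deg G (nbr G v p)}"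
  shows "rport G v p = q"
  unfolding rport_def
proof (rule the_equality)
  fix q' assume "q' < deg G (nbr G v p) \<and> nbr G (nbr G v p) q' = v"
  then show "q' = q" using assms inj_onD[OF assms(3)] by auto
qed (use assms in simp)

locale perm_graph_param =
  fixes m :: nat and \<rho> :: "nat \<Rightarrow> nat"
  assumes m_ge: "3 \<le> m" and perm: "\<rho> permutes {..<num_blocks m}"
begin

lemma m_pos: "0 < m"
  using m_ge by simp

lemma rho_lt: "i < num_blocks m \<Longrightarrow> \<rho> i < num_blocks m"
  using perm permutes_in_image by fastforce

lemma inv_rho_lt: "j < num_blocks m \<Longrightarrow> inv \<rho> j < num_blocks m"
  using permutes_inv[OF perm] permutes_in_image by fastforce

lemma rho_inv_rho [simp]: "\<rho> (inv \<rho> j) = j" and inv_rho_rho [simp]: "inv \<rho> (\<rho> j) = j"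
  using permutes_inverses[OF perm] by simp_all

lemma node_nbr_edge:
  assumes x: "is_node m x" and p: "p < node_deg m x"
  shows "is_node m (node_nbr m \<rho> x p) \<and> node_nbr m \<rho> x p \<noteq> x
    \<and> node_rport m x p < node_deg m (node_nbr m \<rho> x p)
    \<and> node_nbr m \<rho> (node_nbr m \<rho> x p) (node_rport m x p) = x
    \<and> node_deg m (node_nbr m \<rho> x p) = nbr_deg m x p"
proof (cases x)
  case (Member i t)
  define d where "d = digit m i t"
  have d: "d < m" and it: "i < num_blocks m" "t < m"
    using digit_lt[OF m_pos] x Member by (auto simp: d_def)
  show ?thesis
  proof (cases "p = d")
    case False
    define l where "l = clique_nbr m d t p"
    define e where "e = digit m i l"
    have l: "l < m" "l \<noteq> t"
      using clique_nbr_lt[OF m_pos] clique_nbr_eq_self_iff[OF _ d it(2)] p Member False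
      by (auto simp: l_def)
    have e: "e < m" using digit_lt[OF m_pos] by (simp add: e_def)
    have "clique_port m e l t < m" "clique_port m e l t \<noteq> e"
      using clique_port_lt[OF m_pos] clique_port_eq_head_iff[OF it(2) e l(1)] l(2) by auto
    then show ?thesis
      using Member False it l clique_nbr_port[OF it(2)]
      by (simp add: d_def[symmetric] l_def[symmetric] e_def[symmetric])
  qed (use Member it d_def in auto)
qed (use x p num_blocks_ge[OF m_ge] rho_lt inv_rho_lt digit_lt[OF m_pos] in
     \<open>auto simp: clique_port_eq_head_iff\<close>)

lemma node_nbr_inj_on: "is_node m x \<Longrightarrow> inj_on (node_nbr m \<rho> x) {..<node_deg m x}"
proof (cases x)
  case (Member i t)
  assume "is_node m x"
  have "inj_on (clique_nbr m (digit m i t) t) {..<m}"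
    by (rule inj_on_inverseI[where g = "clique_port m (digit m i t) t"]) (simp add: clique_port_nbr)
  then show ?thesis using Member by (auto simp: inj_on_def split: if_splits)
qed (auto simp: inj_on_def split: if_splits)

lemma perm_graph_nbr_inj_on:
  assumes "v < num_nodes m"
  shows "inj_on (nbr (perm_graph m \<rho>) v) {..<deg (perm_graph m \<rho>) v}"
proof -
  define x where "x = node_at m v"
  have x: "is_node m x" using is_node_node_at[OF assms] by (simp add: x_def)
  have "inj_on (node_index m) {y. is_node m y}" by (metis inj_onI mem_Collect_eq node_index_inj)
  moreover have "node_nbr m \<rho> x ` {..<node_deg m x} \<subseteq> {y. is_node m y}"
    using node_nbr_edge[OF x] by blast
  ultimately have "inj_on (node_index m \<circ> node_nbr m \<rho> x) {..<node_deg m x}"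
    using comp_inj_on[OF node_nbr_inj_on[OF x]] inj_on_subset by blast
  then show ?thesis by (simp add: x_def comp_def perm_graph_def)
qed

lemma perm_graph_nbr:
  assumes v: "v < num_nodes m" and p: "p < deg (perm_graph m \<rho>) v"
  shows "nbr (perm_graph m \<rho>) v p < num_nodes m"
    and "nbr (perm_graph m \<rho>) v p \<noteq> v"
    and "node_at m (nbr (perm_graph m \<rho>) v p) = node_nbr m \<rho> (node_at m v) p"
    and "deg (perm_graph m \<rho>) (nbr (perm_graph m \<rho>) v p) = nbr_deg m (node_at m v) p"
    and "rport (perm_graph m \<rho>) v p = node_rport m (node_at m v) p"
    and "rport (perm_graph m \<rho>) v p < deg (perm_graph m \<rho>) (nbr (perm_graph m \<rho>) v p)"
    and "nbr (perm_graph m \<rho>) (nbr (perm_graph m \<rho>) v p) (rport (perm_graph m \<rho>) v p) = v"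
proof -
  let ?G = "perm_graph m \<rho>"
  define x where "x = node_at m v"
  define y where "y = node_nbr m \<rho> x p"
  have x: "is_node m x" "node_index m x = v" using node_at_lt[OF v] by (simp_all add: x_def)
  have px: "p < node_deg m x" using p by (simp add: x_def)
  have edge: "is_node m y" "y \<noteq> x" "node_rport m x p < node_deg m y"
    "node_nbr m \<rho> y (node_rport m x p) = x" "node_deg m y = nbr_deg m x p"
    using node_nbr_edge[OF x(1) px] unfolding y_def by blast+
  have nbr_v: "nbr ?G v p = node_index m y" and at_y: "node_at m (node_index m y) = y"
    using node_at_index[OF edge(1)] by (simp_all add: x_def y_def)
  have reverse: "node_rport m x p < deg ?G (nbr ?G v p)" "nbr ?G (nbr ?G v p) (node_rport m x p) = v"
    "inj_on (nbr ?G (nbr ?G v p)) {..<deg ?G (nbr ?G v p)}"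
    unfolding nbr_v using edge(3,4) x(2) at_y perm_graph_nbr_inj_on[OF node_index_lt[OF edge(1)]]
    by simp_all
  then have rport: "rport ?G v p = node_rport m x p" by (rule rport_eqI)
  have "node_index m y \<noteq> v" using edge(1,2) x node_index_inj by blast
  then show "nbr ?G v p < num_nodes m" "nbr ?G v p \<noteq> v"
    "node_at m (nbr ?G v p) = node_nbr m \<rho> (node_at m v) p"
    "deg ?G (nbr ?G v p) = nbr_deg m (node_at m v) p"
    "rport ?G v p = node_rport m (node_at m v) p"
    "rport ?G v p < deg ?G (nbr ?G v p)" "nbr ?G (nbr ?G v p) (rport ?G v p) = v"
    using node_index_lt[OF edge(1)] at_y edge(5) reverse(1,2) rport
    unfolding nbr_v by (simp_all add: x_def y_def)
qed

lemma perm_graph_edge: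
  "is_node m x \<Longrightarrow> p < node_deg m x \<Longrightarrow>
    (node_index m x, node_index m (node_nbr m \<rho> x p)) \<in> edge_rel (perm_graph m \<rho>)"
  using node_index_lt node_at_index unfolding edge_rel_def by auto

lemma hub_reachable:
  assumes "is_node m x"
  shows "(0, node_index m x) \<in> (edge_rel (perm_graph m \<rho>))\<^sup>* \<and>
         (node_index m x, 0) \<in> (edge_rel (perm_graph m \<rho>))\<^sup>*"
proof -
  let ?E = "edge_rel (perm_graph m \<rho>)"
  have spoke: "(0, node_index m (Spoke j)) \<in> ?E \<and> (node_index m (Spoke j), 0) \<in> ?E"
    if "j < num_blocks m" for j
    using perm_graph_edge[of Hub j] perm_graph_edge[of "Spoke j" 0] that by simp
  have head: "(0, node_index m (Head i)) \<in> ?E\<^sup>* \<and> (node_index m (Head i), 0) \<in> ?E\<^sup>*"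
    if i: "i < num_blocks m" for i
  proof -
    have "(node_index m (Spoke (\<rho> i)), node_index m (Head i)) \<in> ?E"
      "(node_index m (Head i), node_index m (Spoke (\<rho> i))) \<in> ?E"
      using perm_graph_edge[of "Spoke (\<rho> i)" 1] perm_graph_edge[of "Head i" 0] i rho_lt by simp_all
    then show ?thesis using spoke[OF rho_lt[OF i]]
      by (meson converse_rtrancl_into_rtrancl r_into_rtrancl rtrancl_trans)
  qed
  show ?thesis
  proof (cases x)
    case (Member i t)
    have it: "i < num_blocks m" "t < m" using assms Member by auto
    have "(node_index m (Head i), node_index m (Member i t)) \<in> ?E"
      "(node_index m (Member i t), node_index m (Head i)) \<in> ?E"
      using perm_graph_edge[of "Head i" "Suc t"] perm_graph_edge[of "Member i t" "digit m i t"]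
        it digit_lt[OF m_pos] by simp_all
    then show ?thesis using head[OF it(1)] Member
      by (meson rtrancl_into_rtrancl converse_rtrancl_into_rtrancl)
  qed (use assms spoke head in auto)
qed

lemma wf_perm_graph: "wf_pgraph (perm_graph m \<rho>)"
  unfolding wf_pgraph_def
proof (intro conjI allI impI)
  show "1 \<le> nv (perm_graph m \<rho>)" by (simp add: num_nodes_def)
next
  fix v p assume "v < nv (perm_graph m \<rho>)" "p < deg (perm_graph m \<rho>) v"
  then show "nbr (perm_graph m \<rho>) v p < nv (perm_graph m \<rho>)" "nbr (perm_graph m \<rho>) v p \<noteq> v"
    using perm_graph_nbr by auto
next
  fix v assume "v < nv (perm_graph m \<rho>)"
  then show "inj_on (nbr (perm_graph m \<rho>) v) {..<deg (perm_graph m \<rho>) v}"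
    using perm_graph_nbr_inj_on by simp
next
  fix v p assume "v < nv (perm_graph m \<rho>)" "p < deg (perm_graph m \<rho>) v"
  then show "\<exists>q < deg (perm_graph m \<rho>) (nbr (perm_graph m \<rho>) v p).
               nbr (perm_graph m \<rho>) (nbr (perm_graph m \<rho>) v p) q = v"
    using perm_graph_nbr(6,7)[of v p] unfolding perm_graph_simps(1) by blast
next
  fix u v assume "u < nv (perm_graph m \<rho>)" "v < nv (perm_graph m \<rho>)"
  then show "(u, v) \<in> (edge_rel (perm_graph m \<rho>))\<^sup>*"
    using hub_reachable[OF is_node_node_at] node_index_node_at
    by (metis perm_graph_simps(1) rtrancl_trans)
qed

lemma bview1_perm_graph:
  assumes v: "v < num_nodes m"
  shows "bview (perm_graph m \<rho>) 1 v = local_view m (node_at m v)"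
  unfolding local_view_def One_nat_def bview.simps view.inject
proof (rule map_cong)
  fix p assume "p \<in> set [0..<node_deg m (node_at m v)]"
  then show "(p, rport (perm_graph m \<rho>) v p, Leaf (deg (perm_graph m \<rho>) (nbr (perm_graph m \<rho>) v p)))
           = (p, node_rport m (node_at m v) p, Leaf (nbr_deg m (node_at m v) p))"
    using perm_graph_nbr(4,5)[OF v, of p] by simp
qed simp

end

text \<open>Distinct nodes have distinct local views: the digits of i are read off the reverse ports
of the head of block i, and also of those of each of its members, whose own position t is
given by the reverse port of its head port.\<close>

lemma local_view_eqD:
  assumes "local_view m x = local_view m y"
  shows "node_deg m x = node_deg m y"
    and "\<And>p. p < node_deg m x \<Longrightarrow>
           node_rport m x p = node_rport m y p \<and> nbr_deg m x p = nbr_deg m y p"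
proof -
  let ?f = "\<lambda>x p. (p, node_rport m x p, Leaf (nbr_deg m x p))"
  have eq: "map (?f x) [0..<node_deg m x] = map (?f y) [0..<node_deg m y]"
    using assms by (simp add: local_view_def)
  from arg_cong[OF eq, of length] show deg: "node_deg m x = node_deg m y"
    by (simp only: length_map length_upt diff_zero)
  fix p assume p: "p < node_deg m x"
  from arg_cong[OF eq, of "\<lambda>xs. xs ! p"] have "?f x p = ?f y p"
    using p deg by (simp only: nth_map length_upt diff_zero nth_upt add_0)
  then show "node_rport m x p = node_rport m y p \<and> nbr_deg m x p = nbr_deg m y p" by simp
qed

lemma local_view_Member_inj:
  assumes m: "0 < m" and it: "i < num_blocks m" "t < m" and it': "i' < num_blocks m" "t' < m"
    and same: "\<And>p. p < m \<Longrightarrow> node_rport m (Member i t) p = node_rport m (Member i' t') p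
                             \<and> nbr_deg m (Member i t) p = nbr_deg m (Member i' t') p"
  shows "i = i' \<and> t = t'"
proof -
  define d where "d = digit m i t"
  have d: "d < m" using digit_lt[OF m] by (simp add: d_def)
  have "nbr_deg m (Member i' t') d = m + 1" using same[OF d] by (simp add: d_def)
  then have dd: "digit m i' t' = d" by (auto split: if_splits)
  have tt: "t = t'" using same[OF d] dd by (simp add: d_def)
  have "digit m i l = digit m i' l" if l: "l < m" for l
  proof (cases "l = t")
    case False
    define p where "p = clique_port m d t l"
    have "p < m" "p \<noteq> d" "clique_nbr m d t p = l"
      using clique_port_lt[OF m] clique_port_eq_head_iff[OF l d it(2)] clique_nbr_port[OF l] False
      by (auto simp: p_def)
    then have "clique_port m (digit m i l) l t = clique_port m (digit m i' l) l t"
      using same[of p] dd tt by (simp add: d_def)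
    then show ?thesis using clique_port_inj_head[OF m digit_lt[OF m] digit_lt[OF m]] by blast
  qed (use dd tt d_def in simp)
  then show ?thesis using eq_if_digits_eq[of i m m i'] it it' tt by (simp add: num_blocks_def)
qed

lemma local_view_inj:
  assumes m: "3 \<le> m" and x: "is_node m x" and y: "is_node m y"
    and eq: "local_view m x = local_view m y"
  shows "x = y"
proof -
  note deg = local_view_eqD(1)[OF eq] and same = local_view_eqD(2)[OF eq]
  have K: "m + 2 \<le> num_blocks m" using num_blocks_ge[OF m] .
  show ?thesis
  proof (cases x)
    case Hub then show ?thesis using deg K m by (cases y) auto
  next
    case (Spoke j)
    then obtain j' where "y = Spoke j'" using deg K m by (cases y) auto
    then show ?thesis using same[of 0] Spoke by simp
  next
    case (Head i)
    then obtain i' where y': "y = Head i'" using deg K m by (cases y) auto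
    have "digit m i t = digit m i' t" if "t < m" for t
      using same[of "Suc t"] that Head y' by simp
    then show ?thesis using eq_if_digits_eq[of i m m i'] x y Head y' by (simp add: num_blocks_def)
  next
    case (Member i t)
    then obtain i' t' where y': "y = Member i' t'" using deg K m by (cases y) auto
    have "i = i' \<and> t = t'"
    proof (rule local_view_Member_inj)
      show "0 < m" "i < num_blocks m" "t < m" "i' < num_blocks m" "t' < m"
        using m x y Member y' by auto
      fix p assume "p < m"
      then show "node_rport m (Member i t) p = node_rport m (Member i' t') p
               \<and> nbr_deg m (Member i t) p = nbr_deg m (Member i' t') p"
        using same[of p] Member y' by simp
    qed
    then show ?thesis using Member y' by simp
  qed
qed

definition in_block :: "nat \<Rightarrow> nat \<Rightarrow> nat \<Rightarrow> bool" where
  "in_block m i v \<longleftrightarrow> v < num_nodes m \<and> (node_at m v = Head i \<or> (\<exists>t. node_at m v = Member i t))"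

context perm_graph_param
begin

lemma inj_bview1: "inj_on (bview (perm_graph m \<rho>) 1) (verts (perm_graph m \<rho>))"
proof (rule inj_onI)
  fix u v assume "u \<in> verts (perm_graph m \<rho>)" "v \<in> verts (perm_graph m \<rho>)"
    and "bview (perm_graph m \<rho>) 1 u = bview (perm_graph m \<rho>) 1 v"
  then show "u = v"
    using local_view_inj[OF m_ge is_node_node_at is_node_node_at] bview1_perm_graph
      node_index_node_at by (metis lessThan_iff verts_perm_graph)
qed

lemma not_inj_bview0: "\<not> inj_on (bview (perm_graph m \<rho>) 0) (verts (perm_graph m \<rho>))"
proof
  assume inj: "inj_on (bview (perm_graph m \<rho>) 0) (verts (perm_graph m \<rho>))"
  have nodes: "is_node m (Member 0 0)" "is_node m (Member 0 1)"
    using num_blocks_ge[OF m_ge] m_ge by auto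
  then have "node_index m (Member 0 0) \<in> verts (perm_graph m \<rho>)"
    "node_index m (Member 0 1) \<in> verts (perm_graph m \<rho>)"
    using node_index_lt by (simp_all only: verts_perm_graph lessThan_iff)
  moreover have "bview (perm_graph m \<rho>) 0 (node_index m (Member 0 0))
               = bview (perm_graph m \<rho>) 0 (node_index m (Member 0 1))"
    by (simp only: bview.simps perm_graph_simps node_at_index[OF nodes(1)]
        node_at_index[OF nodes(2)] node_deg.simps)
  ultimately have "node_index m (Member 0 0) = node_index m (Member 0 1)" using inj_onD[OF inj] by blast
  then show False by simp
qed

lemma feasible_perm_graph: "feasible (perm_graph m \<rho>)"
  using inj_bview1 unfolding feasible_def by blast

lemma election_index_perm_graph: "election_index (perm_graph m \<rho>) = 1"
  unfolding election_index_def
proof (rule Least_equality)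
  fix l assume "inj_on (bview (perm_graph m \<rho>) l) (verts (perm_graph m \<rho>))"
  then show "1 \<le> l" using not_inj_bview0 by (cases l) auto
qed (rule inj_bview1)

lemma member_walk_stays_in_block:
  assumes i: "i < num_blocks m" and t: "t < m"
    and w: "walk (perm_graph m \<rho>) (node_index m (Member i t)) s = Some vs"
    and no_head: "node_index m (Head i) \<notin> set vs"
  shows "\<forall>v\<in>set vs. in_block m i v"
proof -
  let ?G = "perm_graph m \<rho>"
  define S where "S = (\<lambda>l. node_index m (Member i l)) ` {..<m}"
  have members: "is_node m (Member i l)" if "l < m" for l using i that by simp
  have "nbr ?G v p \<in> S \<or> nbr ?G v p = node_index m (Head i)" if "v \<in> S" for v p
  proof -
    obtain l where l: "l < m" "v = node_index m (Member i l)" using \<open>v \<in> S\<close> S_def by auto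
    then have "nbr ?G v p = node_index m (node_nbr m \<rho> (Member i l) p)"
      using node_at_index[OF members[OF l(1)]] by simp
    then show ?thesis using clique_nbr_lt[OF m_pos] unfolding S_def by auto
  qed
  then have "set vs \<subseteq> S" using walk_stays_in[OF _ w _ no_head] t by (auto simp: S_def)
  moreover have "\<forall>v\<in>S. in_block m i v"
    using node_index_lt[OF members] node_at_index[OF members] by (auto simp: S_def in_block_def)
  ultimately show ?thesis by blast
qed

text \<open>The output of the head of a block not containing the leader l must leave through the spoke
and, unless it stops there, continue into the hub; in both cases it reveals \<rho> i.\<close>

lemma head_output_reveals_perm:
  assumes i: "i < num_blocks m"
    and w: "walk (perm_graph m \<rho>) (node_index m (Head i)) s = Some vs"
    and "distinct vs" and l: "last vs = l" and not_in: "\<not> in_block m i l"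
  shows "(s = [0, 1] \<and> l = node_index m (Spoke (\<rho> i))) \<or> (\<exists>q r. s = 0 # q # 0 # \<rho> i # r)"
proof -
  let ?G = "perm_graph m \<rho>"
  define h where "h = node_index m (Head i)"
  define c where "c = node_index m (Spoke (\<rho> i))"
  have nodes: "is_node m (Head i)" "is_node m (Spoke (\<rho> i))" using i rho_lt by simp_all
  have h: "h < num_nodes m" "node_at m h = Head i" and c: "c < num_nodes m" "node_at m c = Spoke (\<rho> i)"
    unfolding h_def c_def using node_index_lt[OF nodes(1)] node_at_index[OF nodes(1)]
      node_index_lt[OF nodes(2)] node_at_index[OF nodes(2)] .
  have "s \<noteq> []" using w l not_in h by (auto simp: in_block_def h_def)
  then obtain p q rest where s: "s = p # q # rest" using walk_Some_ConsE w by blast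
  then obtain vs' where w': "walk ?G (nbr ?G h p) rest = Some vs'" "vs = h # vs'"
    "p < deg ?G h" "rport ?G h p = q"
    using walk_Some_ConsD w h_def by blast
  have l': "l = last vs'" "l \<in> set vs'" using walk_Some_hd[OF w'(1)] l w'(2) by auto
  have p0: "p = 0"
  proof (rule ccontr)
    assume "p \<noteq> 0"
    then have nbr_p: "nbr ?G h p = node_index m (Member i (p - 1))" and "p - 1 < m"
      using h w'(3) by auto
    moreover have "node_index m (Head i) \<notin> set vs'" using \<open>distinct vs\<close> w'(2) by (simp add: h_def)
    ultimately have "\<forall>v\<in>set vs'. in_block m i v"
      using member_walk_stays_in_block[OF i _ w'(1)[unfolded nbr_p]] by blast
    then show False using l'(2) not_in by blast
  qed
  have nbr_h: "nbr ?G h 0 = c" and q: "q = 1"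
    using h w'(4) perm_graph_nbr[OF h(1), of 0] p0 by (simp_all add: c_def)
  have w_c: "walk ?G c rest = Some vs'" using w'(1) p0 nbr_h by simp
  show ?thesis
  proof (cases "rest = []")
    case True
    then show ?thesis using w_c l'(1) s p0 q by (auto simp: c_def)
  next
    case False
    then obtain p2 q2 r where r: "rest = p2 # q2 # r" using walk_Some_ConsE[OF w_c] by blast
    then obtain vs'' where w'': "walk ?G (nbr ?G c p2) r = Some vs''" "vs' = c # vs''"
      "p2 < deg ?G c" "rport ?G c p2 = q2"
      using walk_Some_ConsD w_c by blast
    have p2: "p2 = 0"
    proof (rule ccontr)
      assume "p2 \<noteq> 0"
      then have "nbr ?G c p2 = h" using c w''(3) by (simp add: h_def)
      then have "h \<in> set vs''" using walk_Some_hd[OF w''(1)] by (metis hd_in_set)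
      then show False using \<open>distinct vs\<close> w'(2) w''(2) by simp
    qed
    have "q2 = \<rho> i" using w''(4) p2 perm_graph_nbr[OF c(1), of 0] w''(3) c by simp
    then show ?thesis using s p0 r p2 by simp
  qed
qed

lemma elects_time1_perm_graph:
  "elects_time1 adv A (perm_graph m \<rho>) \<longleftrightarrow>
     elects (perm_graph m \<rho>) (\<lambda>v. A (adv (perm_graph m \<rho>)) (local_view m (node_at m v)))"
  unfolding elects_time1_def elects_def using bview1_perm_graph by (simp add: verts_perm_graph)

end

lemma perm_graph_determined_by_outputs:
  assumes "perm_graph_param m \<rho>" "perm_graph_param m \<rho>'"
    and "elects (perm_graph m \<rho>) out" "elects (perm_graph m \<rho>') out"
  shows "\<rho> = \<rho>'"
proof -
  interpret G: perm_graph_param m \<rho> by fact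
  interpret G': perm_graph_param m \<rho>' by fact
  obtain l where l: "\<forall>v<num_nodes m.
      (\<exists>vs. walk (perm_graph m \<rho>) v (out v) = Some vs \<and> distinct vs \<and> last vs = l) \<and>
      (\<exists>vs. walk (perm_graph m \<rho>') v (out v) = Some vs \<and> distinct vs \<and> last vs = l)"
    using elects_common_leader[OF assms(3,4)] by (auto simp: verts_perm_graph)
  have agree: "\<rho> i = \<rho>' i" if "i < num_blocks m" "\<not> in_block m i l" for i
    using l[rule_format, OF node_index_lt[of m "Head i"]] that
      G.head_output_reveals_perm[of i] G'.head_output_reveals_perm[of i] by fastforce
  obtain i0 where "\<forall>i\<in>{..<num_blocks m}. i \<noteq> i0 \<longrightarrow> \<rho> i = \<rho>' i"
  proof (cases "\<exists>i0. in_block m i0 l")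
    case True
    then obtain i0 where "in_block m i0 l" by blast
    then have "\<not> in_block m i l" if "i \<noteq> i0" for i using that by (auto simp: in_block_def)
    then show ?thesis using agree that by blast
  qed (use agree in blast)
  then show ?thesis using permutes_eq_if_eq_off_point[OF G.perm G'.perm] by blast
qed

lemma advice_lower_bound:
  assumes m: "3 \<le> m"
    and elects: "\<forall>\<rho>. \<rho> permutes {..<num_blocks m} \<longrightarrow> elects_time1 adv A (perm_graph m \<rho>)"
  shows "\<exists>\<rho>. \<rho> permutes {..<num_blocks m} \<and>
           log 2 (fact (num_blocks m)) < real (length (adv (perm_graph m \<rho>))) + 1"
proof -
  define P where "P = {\<rho>. \<rho> permutes {..<num_blocks m}}"
  have "inj_on (\<lambda>\<rho>. adv (perm_graph m \<rho>)) P"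
  proof (rule inj_onI)
    fix \<rho> \<rho>' assume "\<rho> \<in> P" "\<rho>' \<in> P" and "adv (perm_graph m \<rho>) = adv (perm_graph m \<rho>')"
    moreover from \<open>\<rho> \<in> P\<close> \<open>\<rho>' \<in> P\<close> have "perm_graph_param m \<rho>" "perm_graph_param m \<rho>'"
      using m by (simp_all add: P_def perm_graph_param_def)
    ultimately show "\<rho> = \<rho>'"
      using elects perm_graph_param.elects_time1_perm_graph perm_graph_determined_by_outputs
      unfolding P_def by (metis mem_Collect_eq)
  qed
  moreover have "finite P" "card P = fact (num_blocks m)"
    by (simp_all add: P_def finite_permutations card_permutations)
  moreover have "P \<noteq> {}" using permutes_id unfolding P_def by blast
  ultimately show ?thesis using exists_long_code unfolding P_def by fastforce
qed

section \<open>Size estimates\<close>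

lemma num_nodes_le:
  assumes m: "3 \<le> m"
  shows "num_nodes m \<le> 2 * m * num_blocks m" and "num_nodes m \<le> 2 ^ (m ^ 3)"
proof -
  have "m + 2 \<le> m * m" using mult_le_mono1[OF m, of m] m by linarith
  have "num_nodes m \<le> num_blocks m * (m + 3)"
    using num_blocks_ge[OF m] by (simp add: num_nodes_def algebra_simps)
  also have "\<dots> \<le> num_blocks m * (2 * m)" using m by (intro mult_left_mono) auto
  finally show le: "num_nodes m \<le> 2 * m * num_blocks m" by (simp add: algebra_simps)
  also have "\<dots> \<le> m * m * m ^ m" using m unfolding num_blocks_def by (intro mult_right_mono) auto
  also have "\<dots> = m ^ (m + 2)" by (simp add: power_add power2_eq_square)
  also have "\<dots> \<le> (2 ^ m) ^ (m + 2)" by (intro power_mono) (auto intro: less_exp[THEN less_imp_le])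
  also have "\<dots> = 2 ^ (m * (m + 2))" by (rule power_mult[symmetric])
  also have "\<dots> \<le> 2 ^ (m ^ 3)"
    using mult_left_mono[OF \<open>m + 2 \<le> m * m\<close>, of m]
    by (intro power_increasing) (auto simp: power3_eq_cube)
  finally show "num_nodes m \<le> 2 ^ (m ^ 3)" .
qed

lemma log2_log2_num_nodes_le:
  assumes m: "3 \<le> m"
  shows "log 2 (log 2 (real (num_nodes m))) \<le> 3 * log 2 (real m)"
proof -
  define n where "n = num_nodes m"
  have "2 \<le> n" using num_blocks_ge[OF m] by (simp add: n_def num_nodes_def)
  have "real n \<le> 2 ^ (m ^ 3)" using num_nodes_le(2)[OF m] unfolding n_def
    by (metis of_nat_le_iff of_nat_numeral of_nat_power)
  then have "log 2 (real n) \<le> log 2 (2 ^ (m ^ 3))" using \<open>2 \<le> n\<close> by (intro log_mono) auto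
  then have "log 2 (real n) \<le> real (m ^ 3)" by simp
  then have "log 2 (log 2 (real n)) \<le> log 2 (real (m ^ 3))" using \<open>2 \<le> n\<close> by (intro log_mono) auto
  then show ?thesis using m by (simp add: n_def log_nat_power)
qed

lemma log2_fact_num_blocks_ge:
  assumes m: "3 \<le> m"
  shows "real (num_blocks m) * (real m * log 2 (real m)) / 3 \<le> log 2 (fact (num_blocks m))"
proof -
  define K where "K = num_blocks m"
  have K: "K = m ^ m" "2 \<le> K" using num_blocks_ge[OF m] by (simp_all add: K_def num_blocks_def)
  have "log 2 (real K / 2) = real m * log 2 (real m) - 1" using K by (auto simp: log_divide log_nat_power)
  moreover have "3 \<le> real m * log 2 (real m)" using m mult_mono[of 3 "real m" 1] by fastforce
  ultimately have "real K / 2 * (2 / 3 * (real m * log 2 (real m))) \<le> real K / 2 * log 2 (real K / 2)"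
    by (intro mult_left_mono) auto
  then show ?thesis using log2_fact_ge[OF K(2)] by (simp add: K_def)
qed

lemma loglog_bound:
  assumes m: "3 \<le> m"
  shows "1 / 48 * real (num_nodes m) * log 2 (log 2 (real (num_nodes m))) + 1
         \<le> log 2 (fact (num_blocks m))"
proof -
  define n where "n = num_nodes m"
  define K where "K = num_blocks m"
  define L where "L = real m * log 2 (real m)"
  have nK: "real n \<le> 2 * real m * real K" using num_nodes_le(1)[OF m] unfolding n_def K_def
    by (metis of_nat_le_iff of_nat_mult of_nat_numeral)
  have "real n * log 2 (log 2 (real n)) \<le> real n * (3 * log 2 (real m))"
    using log2_log2_num_nodes_le[OF m] by (intro mult_left_mono) (auto simp: n_def)
  also have "\<dots> \<le> (2 * real m * real K) * (3 * log 2 (real m))"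
    using nK m by (intro mult_right_mono) auto
  finally have upper: "real n * log 2 (log 2 (real n)) \<le> 6 * (real K * L)"
    by (simp add: L_def algebra_simps)
  have "(3::nat) ^ 3 \<le> m ^ 3" using m by (intro power_mono) auto
  also have "\<dots> \<le> K" unfolding K_def num_blocks_def using m by (intro power_increasing) auto
  finally have "27 * 3 \<le> real K * L"
    using m mult_mono[of 3 "real m" 1 "log 2 (real m)"] by (intro mult_mono) (auto simp: L_def)
  then show ?thesis using upper log2_fact_num_blocks_ge[OF m] unfolding n_def K_def L_def by linarith
qed

lemma perm_graph_family:
  assumes m: "3 \<le> m"
  defines "F \<equiv> perm_graph m ` {\<rho>. \<rho> permutes {..<num_blocks m}}"
  shows "finite F" and "F \<noteq> {}"
    and "\<forall>G \<in> F. wf_pgraph G \<and> nv G = num_nodes m \<and> feasible G \<and> election_index G = 1"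
    and "\<forall>G \<in> F. elects_time1 adv A G \<Longrightarrow>
           \<exists>G \<in> F. real (length (adv G))
                     \<ge> 1 / 48 * real (num_nodes m) * log 2 (log 2 (real (num_nodes m)))"
proof -
  have params: "perm_graph_param m \<rho>" if "\<rho> permutes {..<num_blocks m}" for \<rho>
    using m that by (simp add: perm_graph_param_def)
  show "finite F" "F \<noteq> {}" unfolding F_def using permutes_id finite_permutations by blast+
  show "\<forall>G \<in> F. wf_pgraph G \<and> nv G = num_nodes m \<and> feasible G \<and> election_index G = 1"
    unfolding F_def using perm_graph_param.wf_perm_graph perm_graph_param.feasible_perm_graph
      perm_graph_param.election_index_perm_graph params by auto
  assume "\<forall>G \<in> F. elects_time1 adv A G"
  then have "\<forall>\<rho>. \<rho> permutes {..<num_blocks m} \<longrightarrow> elects_time1 adv A (perm_graph m \<rho>)"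
    unfolding F_def by blast
  then obtain \<rho> where "\<rho> permutes {..<num_blocks m}"
    and long: "log 2 (fact (num_blocks m)) < real (length (adv (perm_graph m \<rho>))) + 1"
    using advice_lower_bound[OF m] by blast
  show "\<exists>G \<in> F. real (length (adv G))
               \<ge> 1 / 48 * real (num_nodes m) * log 2 (log 2 (real (num_nodes m)))"
  proof (rule bexI[of _ "perm_graph m \<rho>"])
    show "real (length (adv (perm_graph m \<rho>)))
          \<ge> 1 / 48 * real (num_nodes m) * log 2 (log 2 (real (num_nodes m)))"
      using loglog_bound[OF m] long by linarith
  qed (use \<open>\<rho> permutes {..<num_blocks m}\<close> in \<open>simp add: F_def\<close>)
qed

theorem theorem2:
  shows "\<exists>c::real. c > 0 \<and>
    infinite {n::nat. \<exists>F::pgraph set. finite F \<and> F \<noteq> {} \<and>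
      (\<forall>G \<in> F. wf_pgraph G \<and> nv G = n \<and> feasible G \<and> election_index G = 1) \<and>
      (\<forall>(adv :: pgraph \<Rightarrow> bool list) (A :: bool list \<Rightarrow> view \<Rightarrow> nat list).
         (\<forall>G \<in> F. elects_time1 adv A G) \<longrightarrow>
         (\<exists>G \<in> F. real (length (adv G)) \<ge> c * real n * log 2 (log 2 (real n))))}"
    (is "\<exists>c. _ \<and> infinite {n. ?family c n}")
proof (intro exI conjI)
  have family: "?family (1 / 48) (num_nodes m)" if "3 \<le> m" for m
    using perm_graph_family[OF that] by blast
  show "infinite {n. ?family (1 / 48) n}"
    unfolding infinite_nat_iff_unbounded_le
  proof
    fix N
    show "\<exists>n\<ge>N. n \<in> {n. ?family (1 / 48) n}"
    proof (intro exI conjI)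
      show "N \<le> num_nodes (max 3 N)" using num_blocks_ge[of "max 3 N"] by (simp add: num_nodes_def)
      show "num_nodes (max 3 N) \<in> {n. ?family (1 / 48) n}"
        unfolding mem_Collect_eq by (rule family) simp
    qed
  qed
qed simp

end
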